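(* Let $P$ be a finite poset and $t\geq 2$, $n\geq 1$ integers. Suppose $\mathcal{F}\subseteq[t]^n$ is induced $P$-saturated and $i\in[n]$ is not separating for $\mathcal{F}$. Then there exists an induced $P$-saturated family $\mathcal{F}'\subseteq[t]^n$ with $|\mathcal{F}'|=|\mathcal{F}|$ such that $f(i)\in\{1,t\}$ for all $f\in\mathcal{F}'$.
   Context: $[n]=\{1,\dots,n\}$; $[t]^n$ is the set of functions $f:[n]\to[t]$ ordered by $f\leq g$ iff $f(j)\leq g(j)$ for all $j$. An induced copy of $P$ in $\mathcal{F}\subseteq[t]^n$ is an injective map $\phi:P\to\mathcal{F}$ with $\phi(x)\leq\phi(y)$ iff $x\leq_P y$. $\mathcal{F}$ is induced $P$-saturated if it contains no induced copy of $P$ and for every $f\in[t]^n\setminus\mathcal{F}$, $\mathcal{F}\cup\{f\}$ contains an induced copy of $P$. For $f\in[t]^n$, $D_i(f)\in[t]^{n-1}$ is given by $D_i(f)(x)=f(x)$ for $x<i$ and $D_i(f)(x)=f(x+1)$ for $i\leq x\leq n-1$. Coordinate $i$ is separating for $\mathcal{F}$ if there exist distinct $f,f'\in\mathcal{F}$ with $D_i(f)\leq D_i(f')$ and $f(i)>f'(i)$. *)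

theory Defs
  imports Main
begin

text \<open>The grid [t]^n: functions f : nat \<Rightarrow> nat with f j \<in> {1..t} for j \<in> {1..n},
  normalised to 0 outside {1..n} so that each element of [t]^n has a unique representative.\<close>
definition grid :: "nat \<Rightarrow> nat \<Rightarrow> (nat \<Rightarrow> nat) set" where
  "grid t n = {f. (\<forall>j\<in>{1..n}. f j \<in> {1..t}) \<and> (\<forall>j. j \<notin> {1..n} \<longrightarrow> f j = 0)}"

definition grid_le :: "nat \<Rightarrow> (nat \<Rightarrow> nat) \<Rightarrow> (nat \<Rightarrow> nat) \<Rightarrow> bool" where
  "grid_le n f g \<longleftrightarrow> (\<forall>j\<in>{1..n}. f j \<le> g j)"

definition induced_copy :: "nat \<Rightarrow> (nat \<Rightarrow> nat) set \<Rightarrow> ('p::order \<Rightarrow> (nat \<Rightarrow> nat)) \<Rightarrow> bool" where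
  "induced_copy n F \<phi> \<longleftrightarrow> inj \<phi> \<and> range \<phi> \<subseteq> F \<and>
     (\<forall>x y. grid_le n (\<phi> x) (\<phi> y) \<longleftrightarrow> x \<le> y)"

definition contains_induced :: "'p::order itself \<Rightarrow> nat \<Rightarrow> (nat \<Rightarrow> nat) set \<Rightarrow> bool" where
  "contains_induced P n F \<longleftrightarrow> (\<exists>\<phi> :: 'p \<Rightarrow> (nat \<Rightarrow> nat). induced_copy n F \<phi>)"

definition induced_saturated :: "'p::order itself \<Rightarrow> nat \<Rightarrow> nat \<Rightarrow> (nat \<Rightarrow> nat) set \<Rightarrow> bool" where
  "induced_saturated P t n F \<longleftrightarrow> F \<subseteq> grid t n \<and> \<not> contains_induced P n F \<and>
     (\<forall>f \<in> grid t n - F. contains_induced P n (insert f F))"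

definition del_coord :: "nat \<Rightarrow> nat \<Rightarrow> (nat \<Rightarrow> nat) \<Rightarrow> (nat \<Rightarrow> nat)" where
  "del_coord n i f = (\<lambda>x. if 1 \<le> x \<and> x < i then f x
                         else if i \<le> x \<and> x \<le> n - 1 \<and> 1 \<le> x then f (x + 1) else 0)"

definition separating :: "nat \<Rightarrow> nat \<Rightarrow> (nat \<Rightarrow> nat) set \<Rightarrow> bool" where
  "separating n i F \<longleftrightarrow> (\<exists>f\<in>F. \<exists>f'\<in>F. f \<noteq> f' \<and>
     grid_le (n - 1) (del_coord n i f) (del_coord n i f') \<and> f i > f' i)"

end

theory Submission
  imports Defs
begin

text \<open>Since coordinate i is not separating, f \<le> g away from coordinate i already forces
  f i \<le> g i for f, g \<in> F. Hence squashing coordinate i (keep the value 1, send every other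
  value to t) is an order isomorphism from F onto its image F', so F' is still P-free.
  For saturation, a point h \<notin> F' is pulled back to h(i := x) \<notin> F with the same
  comparabilities to F as h has to F'; the threshold x is read off from the i-th coordinates
  of the members of F lying above and below h away from coordinate i. The copy of P that
  h(i := x) creates in F then maps to a copy of P in F' \<union> {h}.\<close>

definition grid_le_except :: "nat \<Rightarrow> nat \<Rightarrow> (nat \<Rightarrow> nat) \<Rightarrow> (nat \<Rightarrow> nat) \<Rightarrow> bool" where
  "grid_le_except n i f g \<longleftrightarrow> (\<forall>j\<in>{1..n} - {i}. f j \<le> g j)"

lemma grid_le_iff_except:
  "i \<in> {1..n} \<Longrightarrow> grid_le n f g \<longleftrightarrow> grid_le_except n i f g \<and> f i \<le> g i"
  unfolding grid_le_def grid_le_except_def by auto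

lemma del_coord_apply:
  "x \<in> {1..n-1} \<Longrightarrow> del_coord n i f x = f (if x < i then x else Suc x)"
  unfolding del_coord_def by auto

lemma skip_coord_image:
  assumes "i \<in> {1..n}"
  shows "(\<lambda>x. if x < i then x else Suc x) ` {1..n-1} = {1..n} - {i}"
proof
  show "{1..n} - {i} \<subseteq> (\<lambda>x. if x < i then x else Suc x) ` {1..n-1}"
  proof
    fix j assume "j \<in> {1..n} - {i}"
    then show "j \<in> (\<lambda>x. if x < i then x else Suc x) ` {1..n-1}"
    proof (cases "j < i")
      case False
      then have "j = (\<lambda>x. if x < i then x else Suc x) (j - 1)" "j - 1 \<in> {1..n-1}"
        using \<open>j \<in> {1..n} - {i}\<close> assms by auto
      then show ?thesis by blast
    qed (use assms in auto)
  qed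
qed (use assms in auto)

lemma grid_le_del_coord_iff:
  assumes "i \<in> {1..n}"
  shows "grid_le (n-1) (del_coord n i f) (del_coord n i g) \<longleftrightarrow> grid_le_except n i f g"
proof -
  let ?skip = "\<lambda>x. if x < i then x else Suc x"
  have "grid_le (n-1) (del_coord n i f) (del_coord n i g) \<longleftrightarrow>
      (\<forall>x\<in>{1..n-1}. f (?skip x) \<le> g (?skip x))"
    unfolding grid_le_def by (simp add: del_coord_apply)
  also have "\<dots> \<longleftrightarrow> (\<forall>j\<in>?skip ` {1..n-1}. f j \<le> g j)"
    by blast
  finally show ?thesis
    unfolding skip_coord_image[OF assms] grid_le_except_def .
qed

lemma grid_le_except_trans:
  "grid_le_except n i f g \<Longrightarrow> grid_le_except n i g h \<Longrightarrow> grid_le_except n i f h"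
  unfolding grid_le_except_def using le_trans by blast

lemma grid_le_except_fun_upd [simp]:
  "grid_le_except n i (f(i := a)) g \<longleftrightarrow> grid_le_except n i f g"
  "grid_le_except n i f (g(i := a)) \<longleftrightarrow> grid_le_except n i f g"
  unfolding grid_le_except_def by auto

lemma not_separating_coord_mono:
  assumes "\<not> separating n i F" "i \<in> {1..n}" "f \<in> F" "g \<in> F" "grid_le_except n i f g"
  shows "f i \<le> g i"
  using assms grid_le_del_coord_iff[OF assms(2)] unfolding separating_def by force

lemma grid_coord_in_range: "f \<in> grid t n \<Longrightarrow> j \<in> {1..n} \<Longrightarrow> f j \<in> {1..t}"
  unfolding grid_def by blast

lemma grid_le_refl [simp]: "grid_le n f f"
  unfolding grid_le_def by simp

lemma grid_le_antisym:
  assumes "f \<in> grid t n" "g \<in> grid t n" "grid_le n f g" "grid_le n g f"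
  shows "f = g"
proof
  fix j show "f j = g j"
    using assms unfolding grid_def grid_le_def by (cases "j \<in> {1..n}") (auto intro: antisym)
qed

lemma grid_fun_upd:
  "f \<in> grid t n \<Longrightarrow> i \<in> {1..n} \<Longrightarrow> a \<in> {1..t} \<Longrightarrow> f(i := a) \<in> grid t n"
  unfolding grid_def by auto

lemma contains_induced_embedding:
  assumes "contains_induced P n S" and "inj_on \<psi> S" and "\<psi> ` S \<subseteq> T"
    and "\<forall>a\<in>S. \<forall>b\<in>S. grid_le n (\<psi> a) (\<psi> b) \<longleftrightarrow> grid_le n a b"
  shows "contains_induced P n T"
proof -
  obtain \<phi> :: "'a \<Rightarrow> nat \<Rightarrow> nat" where \<phi>: "induced_copy n S \<phi>"
    using assms(1) unfolding contains_induced_def by blast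
  then have "range \<phi> \<subseteq> S" "inj \<phi>" "\<forall>x y. grid_le n (\<phi> x) (\<phi> y) \<longleftrightarrow> x \<le> y"
    unfolding induced_copy_def by auto
  then have "induced_copy n T (\<psi> \<circ> \<phi>)"
    using assms(2-4) unfolding induced_copy_def
    by (auto intro: comp_inj_on inj_on_subset simp: subset_iff)
  then show ?thesis
    unfolding contains_induced_def by blast
qed

definition squash :: "nat \<Rightarrow> nat \<Rightarrow> nat" where
  "squash t v = (if v = 1 then 1 else t)"

definition squash_coord :: "nat \<Rightarrow> nat \<Rightarrow> (nat \<Rightarrow> nat) \<Rightarrow> (nat \<Rightarrow> nat)" where
  "squash_coord t i f = f(i := squash t (f i))"

lemma squash_mono: "1 \<le> t \<Longrightarrow> 1 \<le> a \<Longrightarrow> a \<le> b \<Longrightarrow> squash t a \<le> squash t b"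
  unfolding squash_def by auto

lemma squash_in_range: "1 \<le> t \<Longrightarrow> squash t a \<in> {1..t}"
  unfolding squash_def by auto

lemma squash_threshold:
  fixes A B :: "nat set"
  assumes "t \<ge> 2" "A \<subseteq> {1..t}" "B \<subseteq> {1..t}" "\<forall>a\<in>A. \<forall>b\<in>B. a \<le> b" "c \<in> {1..t}"
  shows "\<exists>x\<in>{1..t}. (\<forall>b\<in>B. x \<le> b \<longleftrightarrow> c \<le> squash t b) \<and> (\<forall>a\<in>A. a \<le> x \<longleftrightarrow> squash t a \<le> c)"
proof -
  have "c \<le> squash t v \<longleftrightarrow> c = 1 \<or> v \<noteq> 1" "squash t v \<le> c \<longleftrightarrow> c = t \<or> v = 1" for v
    using assms(1,5) by (auto simp: squash_def)
  then have reduced: "?thesis \<longleftrightarrow>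
      (\<exists>x\<in>{1..t}. (\<forall>b\<in>B. x \<le> b \<longleftrightarrow> c = 1 \<or> b \<noteq> 1) \<and> (\<forall>a\<in>A. a \<le> x \<longleftrightarrow> c = t \<or> a = 1))"
    by simp
  consider "c = 1" | "c \<noteq> 1" "c \<noteq> t" | "c = t"
    by blast
  then show ?thesis
  proof cases
    case 1
    then show ?thesis
      unfolding reduced using assms(1-3) by (intro bexI[of _ 1]) (auto simp: subset_iff)
  next
    case 2
    show ?thesis
    proof (cases "1 \<in> B")
      case True
      then have "a \<le> 1" if "a \<in> A" for a
        using that assms(4) by blast
      then show ?thesis
        unfolding reduced using 2 assms(1-3) by (intro bexI[of _ 2]) (fastforce simp: subset_iff)+
    next
      case False
      then show ?thesis
        unfolding reduced using 2 assms(1-3) by (intro bexI[of _ 1]) (fastforce simp: subset_iff)+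
    qed
  next
    case 3
    let ?x = "Min (insert t {b\<in>B. 2 \<le> b})"
    have "finite B"
      using assms(3) finite_subset by blast
    then have fin: "finite (insert t {b\<in>B. 2 \<le> b})"
      by simp
    have x_in: "?x \<in> insert t {b\<in>B. 2 \<le> b}"
      using fin by (rule Min_in) simp
    then have "?x \<in> {2..t}"
      using assms(1,3) by auto
    moreover have "?x \<le> b" if "b \<in> B" "2 \<le> b" for b
      using fin that by (simp add: Min_le)
    moreover have "a \<le> ?x" if "a \<in> A" for a
      using x_in that assms(1,2,4) by auto
    ultimately show ?thesis
      unfolding reduced using 3 assms(3) by (intro bexI[of _ ?x]) (fastforce simp: subset_iff)+
  qed
qed

locale coord_monotone_family =
  fixes t n i :: nat and F :: "(nat \<Rightarrow> nat) set"
  assumes t_ge_2: "t \<ge> 2" and i_in: "i \<in> {1..n}" and F_grid: "F \<subseteq> grid t n"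
    and coord_mono: "f \<in> F \<Longrightarrow> g \<in> F \<Longrightarrow> grid_le_except n i f g \<Longrightarrow> f i \<le> g i"
begin

abbreviation squash_i :: "(nat \<Rightarrow> nat) \<Rightarrow> (nat \<Rightarrow> nat)" where
  "squash_i \<equiv> squash_coord t i"

lemma squash_coord_grid: "f \<in> grid t n \<Longrightarrow> squash_i f \<in> grid t n"
  unfolding squash_coord_def using t_ge_2 by (intro grid_fun_upd i_in squash_in_range) simp_all

lemma grid_le_squash_coord_iff:
  assumes "f \<in> F" "g \<in> F"
  shows "grid_le n (squash_i f) (squash_i g) \<longleftrightarrow> grid_le n f g"
proof -
  have "1 \<le> f i"
    using assms(1) F_grid i_in grid_coord_in_range by fastforce
  then show ?thesis
    using coord_mono[OF assms] squash_mono[of t "f i" "g i"] t_ge_2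
    unfolding grid_le_iff_except[OF i_in] squash_coord_def by (auto simp: squash_def)
qed

lemma inj_on_squash_coord: "inj_on squash_i F"
proof
  fix f g assume "f \<in> F" "g \<in> F" "squash_i f = squash_i g"
  then show "f = g"
    using grid_le_squash_coord_iff F_grid grid_le_antisym
    by (metis grid_le_refl subsetD)
qed

lemma not_contains_induced_squash:
  assumes "\<not> contains_induced P n F"
  shows "\<not> contains_induced P n (squash_i ` F)"
proof
  assume copy: "contains_induced P n (squash_i ` F)"
  have inv_sq: "inv_into F squash_i (squash_i f) = f" if "f \<in> F" for f
    using inj_on_squash_coord that by (rule inv_into_f_f)
  have "contains_induced P n F"
    using copy by (rule contains_induced_embedding[where \<psi> = "inv_into F squash_i"])
      (auto simp: inj_on_inv_into inv_into_into inv_sq grid_le_squash_coord_iff)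
  with assms show False ..
qed

lemma obtain_pullback:
  assumes h: "h \<in> grid t n - squash_i ` F"
  obtains h0 where "h0 \<in> grid t n - F"
    and "\<And>f. f \<in> F \<Longrightarrow> grid_le n h0 f \<longleftrightarrow> grid_le n h (squash_i f)"
    and "\<And>f. f \<in> F \<Longrightarrow> grid_le n f h0 \<longleftrightarrow> grid_le n (squash_i f) h"
proof -
  let ?A = "(\<lambda>f. f i) ` {f\<in>F. grid_le_except n i f h}"
  let ?B = "(\<lambda>f. f i) ` {f\<in>F. grid_le_except n i h f}"
  have coord_range: "f i \<in> {1..t}" if "f \<in> grid t n" for f
    using that i_in by (rule grid_coord_in_range)
  have A_range: "?A \<subseteq> {1..t}" and B_range: "?B \<subseteq> {1..t}"
    using F_grid coord_range by auto
  have A_below_B: "\<forall>a\<in>?A. \<forall>b\<in>?B. a \<le> b"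
  proof (clarsimp)
    fix f g assume "f \<in> F" "g \<in> F" "grid_le_except n i f h" "grid_le_except n i h g"
    then show "f i \<le> g i"
      using coord_mono grid_le_except_trans by blast
  qed
  have "h i \<in> {1..t}"
    using h coord_range by blast
  then obtain x where x: "x \<in> {1..t}"
    and up: "\<forall>b\<in>?B. x \<le> b \<longleftrightarrow> h i \<le> squash t b"
    and down: "\<forall>a\<in>?A. a \<le> x \<longleftrightarrow> squash t a \<le> h i"
    using squash_threshold[OF t_ge_2 A_range B_range A_below_B] by blast
  let ?h0 = "h(i := x)"
  have le_h0_iff: "grid_le n ?h0 f \<longleftrightarrow> grid_le n h (squash_i f)" if "f \<in> F" for f
    using up that unfolding grid_le_iff_except[OF i_in] squash_coord_def by auto
  have h0_le_iff: "grid_le n f ?h0 \<longleftrightarrow> grid_le n (squash_i f) h" if "f \<in> F" for f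
    using down that unfolding grid_le_iff_except[OF i_in] squash_coord_def by auto
  have "?h0 \<notin> F"
  proof
    assume h0: "?h0 \<in> F"
    then have "grid_le n h (squash_i ?h0)" "grid_le n (squash_i ?h0) h" "squash_i ?h0 \<in> grid t n"
      using le_h0_iff[OF h0] h0_le_iff[OF h0] F_grid squash_coord_grid by auto
    then have "h = squash_i ?h0"
      using h grid_le_antisym by blast
    with h h0 show False
      by blast
  qed
  moreover have "?h0 \<in> grid t n"
    using h x i_in grid_fun_upd by blast
  ultimately show thesis
    using that le_h0_iff h0_le_iff by blast
qed

lemma contains_induced_insert_squash:
  assumes sat: "\<forall>g \<in> grid t n - F. contains_induced P n (insert g F)"
    and h: "h \<in> grid t n - squash_i ` F"
  shows "contains_induced P n (insert h (squash_i ` F))"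
proof -
  obtain h0 where h0: "h0 \<in> grid t n - F"
    and le_h0_iff: "\<And>f. f \<in> F \<Longrightarrow> grid_le n h0 f \<longleftrightarrow> grid_le n h (squash_i f)"
    and h0_le_iff: "\<And>f. f \<in> F \<Longrightarrow> grid_le n f h0 \<longleftrightarrow> grid_le n (squash_i f) h"
    using obtain_pullback[OF h] by blast
  have "contains_induced P n (insert h0 F)"
    using sat h0 by blast
  moreover
  let ?\<psi> = "\<lambda>g. if g = h0 then h else squash_i g"
  have "inj_on ?\<psi> (insert h0 F)"
    using h h0 inj_on_squash_coord unfolding inj_on_def by auto
  moreover have "?\<psi> ` insert h0 F \<subseteq> insert h (squash_i ` F)"
    by auto
  moreover have "grid_le n (?\<psi> a) (?\<psi> b) \<longleftrightarrow> grid_le n a b"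
    if "a \<in> insert h0 F" "b \<in> insert h0 F" for a b
    using that h0 le_h0_iff h0_le_iff grid_le_squash_coord_iff by auto
  ultimately show ?thesis
    by (blast intro: contains_induced_embedding)
qed

lemma induced_saturated_squash:
  assumes "induced_saturated P t n F"
  shows "induced_saturated P t n (squash_i ` F)"
proof -
  have "squash_i ` F \<subseteq> grid t n"
    using F_grid squash_coord_grid by blast
  then show ?thesis
    using assms not_contains_induced_squash contains_induced_insert_squash
    unfolding induced_saturated_def by blast
qed

end

theorem mainTheorem12:
  fixes P :: "'p::{order,finite} itself" and t n i :: nat and F :: "(nat \<Rightarrow> nat) set"
  assumes "t \<ge> 2" and "n \<ge> 1"
    and "induced_saturated P t n F"
    and "i \<in> {1..n}"
    and "\<not> separating n i F"
  shows "\<exists>F'. induced_saturated P t n F' \<and> card F' = card F \<and> (\<forall>f\<in>F'. f i \<in> {1, t})"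
proof -
  interpret coord_monotone_family t n i F
    using assms not_separating_coord_mono
    by unfold_locales (auto simp: induced_saturated_def)
  have "induced_saturated P t n (squash_i ` F)"
    using assms(3) by (rule induced_saturated_squash)
  moreover have "card (squash_i ` F) = card F"
    using inj_on_squash_coord by (rule card_image)
  moreover have "\<forall>f\<in>squash_i ` F. f i \<in> {1, t}"
    by (auto simp: squash_coord_def squash_def)
  ultimately show ?thesis
    by blast
qed

end
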